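(* Let $f:[0,1]^n \to \mathbb{R}_+$ be a differentiable DR-submodular function and $\vec{x}^* \in [0,1]^n$ a maximizer of $f$. Consider a differentiable trajectory $(\vec{x}^{(t)},\vec{y}^{(t)})$ with $\vec{x}^{(t)} \le \vec{y}^{(t)}$ satisfying $\dot{\vec{x}}^{(t)} = \nabla f(\vec{x}^{(t)})^+$ and $\dot{\vec{y}}^{(t)} = \nabla f(\vec{y}^{(t)})^-$. Let $\vec{p}^{(t)}$ be the projection of $\vec{x}^*$ onto the box $[\vec{x}^{(t)},\vec{y}^{(t)}]$, i.e. $p^{(t)}_i = \min\{\max\{x^*_i, x^{(t)}_i\}, y^{(t)}_i\}$. Then at every time $t$ (where the derivatives exist) $$\frac12\left(\langle \nabla f(\vec{x}^{(t)}), \dot{\vec{x}}^{(t)}\rangle + \langle \nabla f(\vec{y}^{(t)}), \dot{\vec{y}}^{(t)}\rangle\right) + \langle \nabla f(\vec{p}^{(t)}), \dot{\vec{p}}^{(t)}\rangle \ge 0.$$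
   Context: For a vector $\vec{v}$, $\vec{v}^+$ denotes the vector with entries $\max\{v_i,0\}$ and $\vec{v}^-$ the vector with entries $\min\{v_i,0\}$. A function $f:[0,1]^n \to \mathbb{R}_+$ is DR-submodular if for all $\vec{x}\le\vec{y}$ in $[0,1]^n$ (coordinate-wise), all $i\in[n]$ and $\delta\in[0,1]$ with $\vec{x}+\delta\vec{1}_{\{i\}}, \vec{y}+\delta\vec{1}_{\{i\}} \in [0,1]^n$, $f(\vec{x}+\delta\vec{1}_{\{i\}})-f(\vec{x}) \ge f(\vec{y}+\delta\vec{1}_{\{i\}})-f(\vec{y})$; for differentiable $f$ this is equivalent to $\nabla f(\vec{x}) \ge \nabla f(\vec{y})$ whenever $\vec{x}\le\vec{y}$. Dots denote time derivatives. *)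

theory Defs
  imports "HOL-Analysis.Analysis"
begin

definition unit_cube :: "(real ^ 'n) set" where
  "unit_cube = {x. \<forall>i. 0 \<le> x $ i \<and> x $ i \<le> 1}"

definition vpos :: "real ^ 'n \<Rightarrow> real ^ 'n" where
  "vpos v = (\<chi> i. max (v $ i) 0)"

definition vneg :: "real ^ 'n \<Rightarrow> real ^ 'n" where
  "vneg v = (\<chi> i. min (v $ i) 0)"

definition dr_submodular :: "(real ^ 'n \<Rightarrow> real) \<Rightarrow> bool" where
  "dr_submodular f \<longleftrightarrow>
     (\<forall>x y i \<delta>. x \<in> unit_cube \<and> y \<in> unit_cube \<and> x \<le> y \<and> 0 \<le> \<delta> \<and> \<delta> \<le> 1 \<and>
        x + \<delta> *\<^sub>R axis i 1 \<in> unit_cube \<and> y + \<delta> *\<^sub>R axis i 1 \<in> unit_cube \<longrightarrow>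
        f (x + \<delta> *\<^sub>R axis i 1) - f x \<ge> f (y + \<delta> *\<^sub>R axis i 1) - f y)"

definition box_proj :: "real ^ 'n \<Rightarrow> real ^ 'n \<Rightarrow> real ^ 'n \<Rightarrow> real ^ 'n" where
  "box_proj z x y = (\<chi> i. min (max (z $ i) (x $ i)) (y $ i))"

end

theory Submission
  imports Defs
begin

(* DR-submodularity makes the gradient antitone, so x <= p <= y gives
   grad f(y) <= grad f(p) <= grad f(x) coordinatewise.  Each p_i clamps xs_i between x_i and y_i,
   so its time derivative lies between the speeds Y = min (grad f(y))_i 0 of y_i and
   X = max (grad f(x))_i 0 of x_i.  As grad f(p)_i lies in [Y, X] as well and Y <= 0 <= X,
   the product grad f(p)_i * p'_i is at least X * Y, so the i-th summand of the claim is at least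
   (X^2 + Y^2)/2 + X * Y = (X + Y)^2/2 >= 0. *)

lemma unit_cube_nth_bounds:
  assumes "z \<in> unit_cube"
  shows "0 \<le> z $ i" "z $ i \<le> 1"
  using assms by (auto simp: unit_cube_def)

lemma add_axis_in_unit_cube:
  assumes "z \<in> unit_cube" "0 \<le> z $ i + d" "z $ i + d \<le> 1"
  shows "z + d *\<^sub>R axis i 1 \<in> unit_cube"
  using assms by (auto simp: unit_cube_def axis_def)

lemma diff_axis_in_unit_cube:
  assumes "z \<in> unit_cube" "0 \<le> z $ i - d" "z $ i - d \<le> 1"
  shows "z - d *\<^sub>R axis i 1 \<in> unit_cube"
  using assms by (auto simp: unit_cube_def axis_def)

lemma unit_cube_order_convex:
  assumes "x \<in> unit_cube" "y \<in> unit_cube" "x \<le> p" "p \<le> y"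
  shows "p \<in> unit_cube"
proof -
  have "0 \<le> p $ i \<and> p $ i \<le> 1" for i
    using unit_cube_nth_bounds[OF assms(1), of i] unit_cube_nth_bounds[OF assms(2), of i] assms(3,4)
    by (auto simp: less_eq_vec_def dest!: spec[of _ i])
  then show ?thesis
    by (simp add: unit_cube_def)
qed

lemma box_proj_between:
  assumes "x \<le> y"
  shows "x \<le> box_proj z x y" "box_proj z x y \<le> y"
  using assms by (auto simp: box_proj_def less_eq_vec_def)

lemma tendsto_le_at_right_0:
  fixes F G :: "real \<Rightarrow> real"
  assumes "(F \<longlongrightarrow> A) (at_right 0)" "(G \<longlongrightarrow> B) (at_right 0)"
    and "0 < h" "\<And>s. 0 < s \<Longrightarrow> s < h \<Longrightarrow> F s \<le> G s"
  shows "A \<le> B"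
  using eventually_at_right_real[OF \<open>0 < h\<close>]
  by (intro tendsto_le[OF trivial_limit_at_right_real assms(2,1)]) (auto elim!: eventually_mono intro: assms(4))

lemma tendsto_difference_quotient_at_right:
  fixes f :: "'a::real_inner \<Rightarrow> real"
  assumes f': "(f has_derivative (\<lambda>h. g \<bullet> h)) (at z within S)"
    and e: "0 < e" and ray: "\<And>s. s \<in> {0..e} \<Longrightarrow> z + s *\<^sub>R v \<in> S"
  shows "((\<lambda>s. (f (z + s *\<^sub>R v) - f z) / s) \<longlongrightarrow> g \<bullet> v) (at_right 0)"
proof -
  let ?r = "\<lambda>s. z + s *\<^sub>R v"
  have r': "(?r has_derivative (\<lambda>s. s *\<^sub>R v)) (at 0 within {0..e})"
    by (auto intro!: derivative_eq_intros)
  have "(f has_derivative (\<lambda>h. g \<bullet> h)) (at (?r 0) within ?r ` {0..e})"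
    using f' ray by (auto intro: has_derivative_subset)
  from diff_chain_within[OF r' this]
  have "((\<lambda>s. f (?r s)) has_real_derivative g \<bullet> v) (at 0 within {0..e})"
    by (simp add: has_field_derivative_def o_def mult_commute_abs)
  then show ?thesis
    using e by (simp add: has_field_derivative_iff at_within_Icc_at_right)
qed

lemma has_real_derivative_vec_nth:
  assumes "(x has_vector_derivative x') F"
  shows "((\<lambda>s. x s $ i) has_real_derivative x' $ i) F"
  using bounded_linear.has_vector_derivative[OF bounded_linear_vec_nth assms]
  by (simp add: has_real_derivative_iff_has_vector_derivative)

lemma clamp_difference_quotient_bounds:
  fixes c l u l' u' h :: real
  assumes "h \<noteq> 0"
  defines "q \<equiv> (min (max c l') u' - min (max c l) u) / h"
  shows "min (min ((l' - l) / h) ((u' - u) / h)) 0 \<le> q"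
    and "q \<le> max (max ((l' - l) / h) ((u' - u) / h)) 0"
proof -
  \<comment> \<open>The clamp is monotone and 1-Lipschitz in each bound.\<close>
  have lower: "min (min (l' - l) (u' - u)) 0 \<le> min (max c l') u' - min (max c l) u"
    and upper: "min (max c l') u' - min (max c l) u \<le> max (max (l' - l) (u' - u)) 0"
    by linarith+
  consider "0 < h" | "h < 0"
    using assms(1) by linarith
  then show "min (min ((l' - l) / h) ((u' - u) / h)) 0 \<le> q"
    and "q \<le> max (max ((l' - l) / h) ((u' - u) / h)) 0"
    by cases (use lower upper in \<open>auto simp: q_def min_def max_def divide_le_eq le_divide_eq\<close>)
qed

lemma clamp_derivative_bounds:
  fixes l u :: "real \<Rightarrow> real"
  assumes F: "at t within S \<noteq> bot"
    and l': "(l has_real_derivative dl) (at t within S)"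
    and u': "(u has_real_derivative du) (at t within S)"
    and p': "((\<lambda>s. min (max c (l s)) (u s)) has_real_derivative dp) (at t within S)"
  shows "min (min dl du) 0 \<le> dp" "dp \<le> max (max dl du) 0"
proof -
  let ?F = "at t within S"
  let ?q = "\<lambda>g s. (g s - g t) / (s - t)"
  have ql: "(?q l \<longlongrightarrow> dl) ?F" and qu: "(?q u \<longlongrightarrow> du) ?F"
    and qp: "(?q (\<lambda>s. min (max c (l s)) (u s)) \<longlongrightarrow> dp) ?F"
    using l' u' p' by (simp_all add: has_field_derivative_iff)
  have near: "\<forall>\<^sub>F s in ?F. s \<noteq> t"
    by (simp add: eventually_at_filter)
  show "min (min dl du) 0 \<le> dp"
    using near clamp_difference_quotient_bounds(1)
    by (intro tendsto_le[OF F qp, where g = "\<lambda>s. min (min (?q l s) (?q u s)) 0"])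
      (auto intro!: tendsto_intros ql qu elim!: eventually_mono)
  show "dp \<le> max (max dl du) 0"
    using near clamp_difference_quotient_bounds(2)
    by (intro tendsto_le[OF F _ qp, where f = "\<lambda>s. max (max (?q l s) (?q u s)) 0"])
      (auto intro!: tendsto_intros ql qu elim!: eventually_mono)
qed

lemma dr_submodularD:
  assumes "dr_submodular f" "u \<in> unit_cube" "w \<in> unit_cube" "u \<le> w" "0 \<le> d"
    and "u + d *\<^sub>R axis i 1 \<in> unit_cube" "w + d *\<^sub>R axis i 1 \<in> unit_cube"
  shows "f (w + d *\<^sub>R axis i 1) - f w \<le> f (u + d *\<^sub>R axis i 1) - f u"
proof -
  have "d \<le> 1"
    using assms(2,6) by (auto simp: unit_cube_def axis_def dest!: spec[of _ i])
  then show ?thesis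
    using assms unfolding dr_submodular_def by blast
qed

lemma dr_submodular_gradient_antimono:
  fixes f :: "real ^ 'n \<Rightarrow> real"
  assumes grad: "\<forall>z\<in>unit_cube. (f has_derivative (\<lambda>h. df z \<bullet> h)) (at z within unit_cube)"
    and dr: "dr_submodular f" and x: "x \<in> unit_cube" and y: "y \<in> unit_cube" and "x \<le> y"
  shows "df y \<le> df x"
  unfolding less_eq_vec_def
proof
  fix i :: 'n
  let ?e = "axis i (1::real)"
  let ?Q = "\<lambda>z v s. (f (z + s *\<^sub>R v) - f z) / s"
  have up: "(?Q z ?e \<longlongrightarrow> df z $ i) (at_right 0)" if z: "z \<in> unit_cube" and "z $ i < 1" for z
  proof -
    have "(?Q z ?e \<longlongrightarrow> df z \<bullet> ?e) (at_right 0)"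
      by (rule tendsto_difference_quotient_at_right[where e = "1 - z $ i"])
        (use grad that unit_cube_nth_bounds[OF z, of i] in \<open>auto intro!: add_axis_in_unit_cube\<close>)
    then show ?thesis
      by (simp add: inner_axis)
  qed
  have down: "((\<lambda>s. - ?Q z (- ?e) s) \<longlongrightarrow> df z $ i) (at_right 0)" if z: "z \<in> unit_cube" and "0 < z $ i" for z
  proof -
    have "(?Q z (- ?e) \<longlongrightarrow> df z \<bullet> - ?e) (at_right 0)"
      by (rule tendsto_difference_quotient_at_right[where e = "z $ i"])
        (use grad that unit_cube_nth_bounds[OF z, of i] in \<open>auto intro!: diff_axis_in_unit_cube\<close>)
    then show ?thesis
      by (auto simp: inner_axis dest: tendsto_minus)
  qed
  have bounds: "0 \<le> x $ i" "x $ i \<le> y $ i" "y $ i \<le> 1"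
    using x y \<open>x \<le> y\<close> by (auto simp: unit_cube_def less_eq_vec_def)
  \<comment> \<open>Compare the increments of f along e_i at x and y wherever the cube leaves room:
    both to the right, both to the left, or crosswise with x moving right and y moving left.\<close>
  then consider (room_above) "y $ i < 1" | (room_below) "0 < x $ i" | (full) "x $ i = 0" "y $ i = 1"
    by linarith
  then show "df y $ i \<le> df x $ i"
  proof cases
    case room_above
    show ?thesis
    proof (rule tendsto_le_at_right_0[OF up[OF y room_above] up[OF x]])
      fix s :: real assume s: "0 < s" "s < 1 - y $ i"
      then have "f (y + s *\<^sub>R ?e) - f y \<le> f (x + s *\<^sub>R ?e) - f x"
        using bounds by (intro dr_submodularD[OF dr x y \<open>x \<le> y\<close>] add_axis_in_unit_cube x y) auto
      from divide_right_mono[OF this, of s] show "?Q y ?e s \<le> ?Q x ?e s"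
        using s by simp
    qed (use room_above bounds in auto)
  next
    case room_below
    show ?thesis
    proof (rule tendsto_le_at_right_0[OF down[OF y] down[OF x room_below]])
      fix s :: real assume s: "0 < s" "s < x $ i"
      have "x - s *\<^sub>R ?e \<le> y - s *\<^sub>R ?e"
        using \<open>x \<le> y\<close> by (simp add: less_eq_vec_def)
      then have "f (y - s *\<^sub>R ?e + s *\<^sub>R ?e) - f (y - s *\<^sub>R ?e) \<le> f (x - s *\<^sub>R ?e + s *\<^sub>R ?e) - f (x - s *\<^sub>R ?e)"
        using s bounds x y
        by (intro dr_submodularD[OF dr]) (auto intro!: diff_axis_in_unit_cube)
      from divide_right_mono[OF this, of s] show "- ?Q y (- ?e) s \<le> - ?Q x (- ?e) s"
        using s by (simp add: minus_divide_left)
    qed (use room_below bounds in auto)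
  next
    case full
    show ?thesis
    proof (rule tendsto_le_at_right_0[OF down[OF y] up[OF x], where h=1])
      fix s :: real assume s: "0 < s" "s < 1"
      have "x \<le> y - s *\<^sub>R ?e"
        using \<open>x \<le> y\<close> full s by (auto simp: less_eq_vec_def axis_def)
      then have "f (y - s *\<^sub>R ?e + s *\<^sub>R ?e) - f (y - s *\<^sub>R ?e) \<le> f (x + s *\<^sub>R ?e) - f x"
        using s full x y
        by (intro dr_submodularD[OF dr]) (auto intro!: diff_axis_in_unit_cube add_axis_in_unit_cube)
      from divide_right_mono[OF this, of s] show "- ?Q y (- ?e) s \<le> ?Q x ?e s"
        using s by (simp add: minus_divide_left)
    qed (use full in auto)
  qed
qed

lemma gradient_flow_coordinate_bound:
  fixes gx gy gp p :: real
  assumes "gy \<le> gp" "gp \<le> gx" "min gy 0 \<le> p" "p \<le> max gx 0"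
  shows "0 \<le> (gx * max gx 0 + gy * min gy 0) / 2 + gp * p"
proof -
  define X where "X = max gx 0"
  define Y where "Y = min gy 0"
  have "0 \<le> (X * X + Y * Y) / 2 + X * Y"
    using zero_le_square[of "X + Y"] by (simp add: field_simps)
  also have "X * Y \<le> gp * p"
  proof (cases "0 \<le> gp")
    case True
    then have "gp * Y \<le> gp * p" and "X * Y \<le> gp * Y"
      using assms by (simp_all add: X_def Y_def mult_left_mono mult_right_mono_neg)
    then show ?thesis by linarith
  next
    case False
    then have "gp * X \<le> gp * p" and "Y * X \<le> gp * X"
      using assms by (simp_all add: X_def Y_def mult_left_mono_neg mult_right_mono)
    then show ?thesis by (simp add: mult.commute)
  qed
  also have "(X * X + Y * Y) / 2 = (gx * max gx 0 + gy * min gy 0) / 2"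
    by (auto simp: X_def Y_def max_def min_def)
  finally show ?thesis
    by simp
qed

theorem lemma5:
  fixes f :: "real ^ 'n \<Rightarrow> real"
    and df :: "real ^ 'n \<Rightarrow> real ^ 'n"
    and xs :: "real ^ 'n"
    and x y :: "real \<Rightarrow> real ^ 'n"
    and a b t :: real
    and p' :: "real ^ 'n"
  assumes nonneg: "\<forall>z\<in>unit_cube. 0 \<le> f z"
    and grad: "\<forall>z\<in>unit_cube. (f has_derivative (\<lambda>h. df z \<bullet> h)) (at z within unit_cube)"
    and dr: "dr_submodular f"
    and xs_in: "xs \<in> unit_cube"
    and xs_max: "\<forall>z\<in>unit_cube. f z \<le> f xs"
    and ab: "a < b"
    and x_in: "\<forall>s\<in>{a..b}. x s \<in> unit_cube"
    and y_in: "\<forall>s\<in>{a..b}. y s \<in> unit_cube"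
    and xy: "\<forall>s\<in>{a..b}. x s \<le> y s"
    and x_ode: "\<forall>s\<in>{a..b}. (x has_vector_derivative vpos (df (x s))) (at s within {a..b})"
    and y_ode: "\<forall>s\<in>{a..b}. (y has_vector_derivative vneg (df (y s))) (at s within {a..b})"
    and t_in: "t \<in> {a..b}"
    and p_deriv: "((\<lambda>s. box_proj xs (x s) (y s)) has_vector_derivative p') (at t within {a..b})"
  shows "(1/2) * (df (x t) \<bullet> vpos (df (x t)) + df (y t) \<bullet> vneg (df (y t)))
           + df (box_proj xs (x t) (y t)) \<bullet> p' \<ge> 0"
proof -
  let ?p = "box_proj xs (x t) (y t)"
  have xt: "x t \<in> unit_cube" and yt: "y t \<in> unit_cube" and "x t \<le> y t"
    using x_in y_in xy t_in by auto
  note p_between = box_proj_between[OF \<open>x t \<le> y t\<close>, of xs]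
  have p_in: "?p \<in> unit_cube"
    by (rule unit_cube_order_convex[OF xt yt p_between])
  have coordinate: "0 \<le> (df (x t) $ i * max (df (x t) $ i) 0 + df (y t) $ i * min (df (y t) $ i) 0) / 2
      + df ?p $ i * p' $ i" for i
  proof (rule gradient_flow_coordinate_bound)
    show "df (y t) $ i \<le> df ?p $ i" "df ?p $ i \<le> df (x t) $ i"
      using dr_submodular_gradient_antimono[OF grad dr] xt yt p_in p_between
      by (auto simp: less_eq_vec_def)
    have "at t within {a..b} \<noteq> bot"
      using ab t_in by (simp add: trivial_limit_within)
    from clamp_derivative_bounds[OF this has_real_derivative_vec_nth[OF x_ode[rule_format, OF t_in]]
        has_real_derivative_vec_nth[OF y_ode[rule_format, OF t_in]]]
    show "min (df (y t) $ i) 0 \<le> p' $ i" "p' $ i \<le> max (df (x t) $ i) 0"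
      using has_real_derivative_vec_nth[OF p_deriv, of i] by (auto simp: box_proj_def vpos_def vneg_def)
  qed
  have "(1/2) * (df (x t) \<bullet> vpos (df (x t)) + df (y t) \<bullet> vneg (df (y t))) + df ?p \<bullet> p'
      = (\<Sum>i\<in>UNIV. (df (x t) $ i * max (df (x t) $ i) 0 + df (y t) $ i * min (df (y t) $ i) 0) / 2
          + df ?p $ i * p' $ i)"
    by (simp add: inner_vec_def vpos_def vneg_def sum.distrib flip: sum_divide_distrib)
  also have "\<dots> \<ge> 0"
    using coordinate by (rule sum_nonneg)
  finally show ?thesis .
qed
end
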